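(* For every $\vec x\in\mathfrak{x}$, let $\vec{\rho_x}(\vec x)=(\rho_x(x_1),\dots,\rho_x(x_{K-1}))\in\mathbb{R}^{K-1}$ and let $\vec v(\vec x)\in\mathbb{R}^{K-1}$ be defined by $\mathrm{W}\vec v(\vec x)=\partial_{\vec x}\mathbf{A}_{\boldsymbol\xi}(\vec x)$. Then the residual $\nu=\vec v(\vec x)-\vec{\rho_x}(\vec x)$ satisfies $$\nu^T\mathrm{W}\nu\le C\kappa^2\alpha(\boldsymbol\xi)M\,\overline\delta(\vec x)^2,$$ with some universal constant $C$.
   Context: $I=[a,b]$, $M>0$. Mesh $\boldsymbol\xi=(\xi_0,\dots,\xi_K)$ with $0=\xi_0<\dots<\xi_K=M$, $\delta_k=\xi_k-\xi_{k-1}$, $\alpha(\boldsymbol\xi)=\max_k\delta_k/\min_k\delta_k$. $\mathfrak{x}=\{\vec x=(x_1,\dots,x_{K-1}):a<x_1<\dots<x_{K-1}<b\}$ with $x_0=a$, $x_K=b$, and $\overline\delta(\vec x)=\max_k(x_k-x_{k-1})$. $\theta_0,\dots,\theta_K$ are the piecewise linear hat functions on $[0,M]$ with $\theta_k(\xi_m)=1$ if $m=k$ and $0$ otherwise; $\mathbf{X}_{\boldsymbol\xi}[\vec x]=\sum_{k=0}^Kx_k\theta_k$. $\mathrm{W}$ is the symmetric tridiagonal $(K-1)\times(K-1)$ matrix with $\mathrm{W}_{k,k}=\frac13(\delta_k+\delta_{k+1})$, $\mathrm{W}_{k,k+1}=\mathrm{W}_{k+1,k}=\frac16\delta_{k+1}$.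 $\rho\in C^\infty(I)$ with $\rho_x(a)=\rho_x(b)=0$, and $\kappa>0$ with $|\rho_x|,|\rho_{xx}|,|\rho_{xxx}|\le\kappa$ on $I$. $\mathbf{A}_{\boldsymbol\xi}(\vec x)=\int_0^M\rho(\mathbf{X}_{\boldsymbol\xi}[\vec x](\xi))\,d\xi$, so $[\partial_{\vec x}\mathbf{A}_{\boldsymbol\xi}(\vec x)]_k=\int_0^M\rho_x(\mathbf{X}_{\boldsymbol\xi}[\vec x])\theta_k\,d\xi$. *)

theory Defs
  imports "HOL-Analysis.Analysis"
begin

definition mesh_delta :: "(nat \<Rightarrow> real) \<Rightarrow> nat \<Rightarrow> real" where
  "mesh_delta xi k = xi k - xi (k - 1)"

definition mesh_ratio :: "nat \<Rightarrow> (nat \<Rightarrow> real) \<Rightarrow> real" where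
  "mesh_ratio K xi = Max (mesh_delta xi ` {1..K}) / Min (mesh_delta xi ` {1..K})"

definition max_gap :: "nat \<Rightarrow> (nat \<Rightarrow> real) \<Rightarrow> real" where
  "max_gap K x = Max ((\<lambda>k. x k - x (k - 1)) ` {1..K})"

definition hat :: "nat \<Rightarrow> (nat \<Rightarrow> real) \<Rightarrow> nat \<Rightarrow> real \<Rightarrow> real" where
  "hat K xi k s =
     (if 0 < k \<and> xi (k - 1) \<le> s \<and> s \<le> xi k then (s - xi (k - 1)) / (xi k - xi (k - 1))
      else if k < K \<and> xi k \<le> s \<and> s \<le> xi (k + 1) then (xi (k + 1) - s) / (xi (k + 1) - xi k)
      else 0)"

definition Xmap :: "nat \<Rightarrow> (nat \<Rightarrow> real) \<Rightarrow> (nat \<Rightarrow> real) \<Rightarrow> real \<Rightarrow> real" where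
  "Xmap K xi x s = (\<Sum>k = 0..K. x k * hat K xi k s)"

definition Afun :: "nat \<Rightarrow> (nat \<Rightarrow> real) \<Rightarrow> (real \<Rightarrow> real) \<Rightarrow> (nat \<Rightarrow> real) \<Rightarrow> real" where
  "Afun K xi rho x = integral {0..xi K} (\<lambda>s. rho (Xmap K xi x s))"

text \<open>Gradient components [d_x A_xi(x)]_k = int_0^M rho_x(X_xi[x]) theta_k, k = 1..K-1,
  with rho_x the derivative of rho.\<close>
definition gradA :: "nat \<Rightarrow> (nat \<Rightarrow> real) \<Rightarrow> (real \<Rightarrow> real) \<Rightarrow> (nat \<Rightarrow> real) \<Rightarrow> nat \<Rightarrow> real" where
  "gradA K xi rho_x x k = integral {0..xi K} (\<lambda>s. rho_x (Xmap K xi x s) * hat K xi k s)"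

definition Wmat :: "(nat \<Rightarrow> real) \<Rightarrow> nat \<Rightarrow> nat \<Rightarrow> real" where
  "Wmat xi i j =
     (if i = j then (mesh_delta xi i + mesh_delta xi (i + 1)) / 3
      else if j = i + 1 then mesh_delta xi (i + 1) / 6
      else if i = j + 1 then mesh_delta xi i / 6
      else 0)"

definition Wquad :: "nat \<Rightarrow> (nat \<Rightarrow> real) \<Rightarrow> (nat \<Rightarrow> real) \<Rightarrow> real" where
  "Wquad K xi nu = (\<Sum>i = 1..K - 1. \<Sum>j = 1..K - 1. nu i * Wmat xi i j * nu j)"

end

theory Submission
  imports Defs
begin

text \<open>Extend the residual \<nu> by zero at both ends and let g = X[\<nu>]. Since W is the mass
  matrix of the hat functions, \<nu>^T W w = \<integral> X[\<nu>] X[w] for every w vanishing at both ends.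
  The equation for v gives \<nu>^T W v = \<integral> \<rho>'(X[x]) g, and as \<rho>'(a) = \<rho>'(b) = 0 the interpolant
  I = X[\<rho>' \<circ> x] vanishes at both ends too, so \<nu>^T W \<nu> = \<integral> g (\<rho>'(X[x]) - I): g is the
  L^2-projection of the interpolation error onto the span of the hat functions. Hence
  \<nu>^T W \<nu> \<le> \<integral> (\<rho>'(X[x]) - I)^2, and on each cell the linear interpolation error of the
  \<kappa>-Lipschitz function \<rho>' is at most \<kappa> times the maximal gap of x. This gives the bound with
  C = 1, without even using the factor \<alpha>(\<xi>) \<ge> 1.\<close>

lemma strict_chain_less:
  fixes f :: "nat \<Rightarrow> 'a::order"
  assumes "\<forall>k<K. f k < f (Suc k)" "i < j" "j \<le> K"
  shows "f i < f j"
  by (rule lift_Suc_mono_less_ivl[of "{..<K}"]) (use assms in auto)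

lemma strict_chain_le:
  fixes f :: "nat \<Rightarrow> 'a::order"
  assumes "\<forall>k<K. f k < f (Suc k)" "i \<le> j" "j \<le> K"
  shows "f i \<le> f j"
  by (rule lift_Suc_mono_le_ivl[of "{..<K}"]) (use assms in \<open>auto intro: less_imp_le\<close>)

lemma lipschitz_interpolation_error:
  fixes F :: "real \<Rightarrow> real"
  assumes lip: "\<kappa>-lipschitz_on {y0..y1} F" and t: "0 \<le> t" "t \<le> 1" and "y0 \<le> y1"
  shows "\<bar>F ((1-t)*y0 + t*y1) - ((1-t) * F y0 + t * F y1)\<bar> \<le> \<kappa> * (y1 - y0)"
proof -
  define y where "y = (1-t)*y0 + t*y1"
  have "y - y0 = t * (y1 - y0)" "y1 - y = (1-t) * (y1 - y0)"
    by (simp_all add: y_def algebra_simps)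
  moreover have "0 \<le> t * (y1 - y0)" "0 \<le> (1-t) * (y1 - y0)"
    using t \<open>y0 \<le> y1\<close> by simp_all
  ultimately have dy0: "\<bar>y - y0\<bar> = t * (y1 - y0)" and dy1: "\<bar>y - y1\<bar> = (1-t) * (y1 - y0)"
    by linarith+
  then have y: "y \<in> {y0..y1}" and ends: "y0 \<in> {y0..y1}" "y1 \<in> {y0..y1}"
    using t \<open>y0 \<le> y1\<close> by (auto simp: y_def algebra_simps)
  have e: "\<bar>F y - F y0\<bar> \<le> \<kappa> * (t * (y1 - y0))" "\<bar>F y - F y1\<bar> \<le> \<kappa> * ((1-t) * (y1 - y0))"
    using lipschitz_onD[OF lip y ends(1)] lipschitz_onD[OF lip y ends(2)] dy0 dy1
    by (simp_all add: dist_real_def)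
  have "0 \<le> \<kappa>" using lipschitz_on_nonneg[OF lip] .
  have err: "\<bar>(1-t) * (F y - F y0) + t * (F y - F y1)\<bar> \<le> 2 * (t * (1-t)) * (\<kappa> * (y1 - y0))"
  proof -
    have "\<bar>(1-t) * (F y - F y0) + t * (F y - F y1)\<bar> \<le> (1-t) * \<bar>F y - F y0\<bar> + t * \<bar>F y - F y1\<bar>"
      using t abs_triangle_ineq[of "(1-t) * (F y - F y0)" "t * (F y - F y1)"] by (simp add: abs_mult)
    also have "\<dots> \<le> (1-t) * (\<kappa> * (t * (y1 - y0))) + t * (\<kappa> * ((1-t) * (y1 - y0)))"
      using t e by (intro add_mono mult_left_mono) auto
    finally show ?thesis by (simp add: algebra_simps)
  qed
  have "t * (1-t) \<le> 1/4"
    using zero_le_power2[of "t - 1/2"] by (simp add: power2_eq_square algebra_simps)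
  then have "2 * (t * (1-t)) * (\<kappa> * (y1 - y0)) \<le> \<kappa> * (y1 - y0)"
    using \<open>0 \<le> \<kappa>\<close> \<open>y0 \<le> y1\<close> t by (intro mult_left_le_one_le) auto
  moreover have "F y - ((1-t) * F y0 + t * F y1) = (1-t) * (F y - F y0) + t * (F y - F y1)"
    by (simp add: algebra_simps)
  ultimately show ?thesis using err by (simp add: y_def)
qed

lemma square_integral_le_of_inner_eq:
  fixes g h :: "'a::euclidean_space \<Rightarrow> real"
  assumes gg: "((\<lambda>s. g s * g s) has_integral Q) S" and gh: "((\<lambda>s. g s * h s) has_integral Q) S"
    and hh: "(\<lambda>s. (h s)\<^sup>2) integrable_on S"
  shows "Q \<le> integral S (\<lambda>s. (h s)\<^sup>2)"
proof -
  have "((\<lambda>s. g s * g s - 2 * (g s * h s) + (h s)\<^sup>2) has_integral Q - 2 * Q + integral S (\<lambda>s. (h s)\<^sup>2)) S"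
    by (intro has_integral_add has_integral_diff has_integral_mult_right gg gh integrable_integral hh)
  moreover have "g s * g s - 2 * (g s * h s) + (h s)\<^sup>2 = (g s - h s)\<^sup>2" for s
    by (simp add: power2_eq_square algebra_simps)
  ultimately have "((\<lambda>s. (g s - h s)\<^sup>2) has_integral integral S (\<lambda>s. (h s)\<^sup>2) - Q) S"
    by simp
  then have "0 \<le> integral S (\<lambda>s. (h s)\<^sup>2) - Q"
    by (rule has_integral_nonneg) simp
  then show ?thesis by simp
qed

lemma mesh_ratio_ge_1:
  assumes "1 \<le> K" "\<forall>k<K. xi k < xi (Suc k)"
  shows "1 \<le> mesh_ratio K xi"
proof -
  let ?\<delta> = "mesh_delta xi ` {1..K}"
  have fin: "finite ?\<delta>" and "mesh_delta xi 1 \<in> ?\<delta>" using assms(1) by auto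
  then have "Min ?\<delta> \<le> Max ?\<delta>" by (meson Max_ge Min_le order_trans)
  moreover have "0 < mesh_delta xi k" if "k \<in> {1..K}" for k
    using that strict_chain_less[OF assms(2), of "k-1" k] by (simp add: mesh_delta_def)
  then have "0 < Min ?\<delta>"
    using fin \<open>mesh_delta xi 1 \<in> ?\<delta>\<close> by (subst Min_gr_iff) auto
  ultimately show ?thesis unfolding mesh_ratio_def by simp
qed

lemma has_integral_product_affine:
  fixes p q A B C E :: real
  assumes "p < q"
  shows "((\<lambda>s. (A*((q-s)/(q-p)) + B*((s-p)/(q-p))) * (C*((q-s)/(q-p)) + E*((s-p)/(q-p))))
     has_integral (q-p)/6*(2*A*C + A*E + B*C + 2*B*E)) {p..q}"
proof -
  define g where "g t = (A*(1-t)+B*t)*(C*(1-t)+E*t)" for t :: real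
  define G where "G t = A*C*t + (A*(E-C)+C*(B-A)) * t^2/2 + (B-A)*(E-C)*t^3/3" for t :: real
  have G': "(G has_real_derivative g t) (at t)" for t
    unfolding G_def g_def
    by (auto intro!: derivative_eq_intros simp: field_simps power2_eq_square power3_eq_cube)
  have "((\<lambda>s. (q-p) * G ((s-p)/(q-p))) has_real_derivative (q-p) * (g ((s-p)/(q-p)) * (1/(q-p))))
      (at s within {p..q})" for s
    using assms by (intro DERIV_cmult DERIV_chain2[OF G']) (auto intro!: derivative_eq_intros)
  moreover have "(q-p) * (g ((s-p)/(q-p)) * (1/(q-p)))
      = (A*((q-s)/(q-p)) + B*((s-p)/(q-p))) * (C*((q-s)/(q-p)) + E*((s-p)/(q-p)))" for s
  proof -
    have "(q-s)/(q-p) = 1 - (s-p)/(q-p)" using assms by (simp add: field_simps)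
    then show ?thesis using assms by (simp add: g_def)
  qed
  ultimately have "((\<lambda>s. (q-p) * G ((s-p)/(q-p))) has_vector_derivative
      (A*((q-s)/(q-p)) + B*((s-p)/(q-p))) * (C*((q-s)/(q-p)) + E*((s-p)/(q-p)))) (at s within {p..q})" for s
    by (metis has_real_derivative_iff_has_vector_derivative)
  from fundamental_theorem_of_calculus[OF less_imp_le[OF assms] this]
  show ?thesis using assms by (simp add: G_def field_simps)
qed

definition Wform :: "nat \<Rightarrow> (nat \<Rightarrow> real) \<Rightarrow> (nat \<Rightarrow> real) \<Rightarrow> (nat \<Rightarrow> real) \<Rightarrow> real" where
  "Wform K xi c d = (\<Sum>i = 1..K - 1. \<Sum>j = 1..K - 1. c i * Wmat xi i j * d j)"

lemma Wquad_eq_Wform: "Wquad K xi c = Wform K xi c c"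
  by (simp add: Wquad_def Wform_def)

lemma Wform_eq_sum_rows: "Wform K xi c d = (\<Sum>i = 1..K - 1. c i * (\<Sum>j = 1..K - 1. Wmat xi i j * d j))"
  by (simp add: Wform_def sum_distrib_left mult.assoc)

lemma Wform_diff_right: "Wform K xi c (\<lambda>j. d j - e j) = Wform K xi c d - Wform K xi c e"
  by (simp add: Wform_def sum_subtractf right_diff_distrib)

lemma Wform_cong:
  assumes "\<And>i. i \<in> {1..K - 1} \<Longrightarrow> c i = c' i" "\<And>j. j \<in> {1..K - 1} \<Longrightarrow> d j = d' j"
  shows "Wform K xi c d = Wform K xi c' d'"
  unfolding Wform_def using assms by (intro sum.cong refl) auto

lemma Wmat_row_sum:
  assumes i: "i \<in> {1..K - 1}" and d: "d 0 = 0" "d K = 0"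
  shows "(\<Sum>j = 1..K - 1. Wmat xi i j * d j) =
    mesh_delta xi i / 6 * d (i-1) + (mesh_delta xi i + mesh_delta xi (i+1)) / 3 * d i
    + mesh_delta xi (i+1) / 6 * d (i+1)"
proof -
  let ?F = "\<lambda>j. Wmat xi i j * d j"
  have "(\<Sum>j = 1..K - 1. ?F j) = (\<Sum>j = 0..K. ?F j)"
  proof (rule sum.mono_neutral_left)
    show "\<forall>j\<in>{0..K} - {1..K - 1}. ?F j = 0"
    proof
      fix j assume "j \<in> {0..K} - {1..K - 1}"
      then have "j = 0 \<or> j = K" by auto
      then show "?F j = 0" using d by auto
    qed
  qed auto
  also have "\<dots> = (\<Sum>j \<in> {i-1, i, i+1}. ?F j)"
    by (rule sum.mono_neutral_right) (use i in \<open>auto simp: Wmat_def\<close>)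
  also have "\<dots> = ?F (i-1) + ?F i + ?F (i+1)"
  proof -
    have "i - 1 \<noteq> i" "i - 1 \<noteq> i + 1" using i by auto
    then show ?thesis by (simp add: algebra_simps)
  qed
  also have "\<dots> = mesh_delta xi i / 6 * d (i-1) + (mesh_delta xi i + mesh_delta xi (i+1)) / 3 * d i
    + mesh_delta xi (i+1) / 6 * d (i+1)"
  proof -
    have "i - 1 \<noteq> i" "i - 1 \<noteq> i + 1" "i = (i - 1) + 1" using i by auto
    then show ?thesis by (simp add: Wmat_def)
  qed
  finally show ?thesis .
qed

text \<open>W is the mass matrix of the hat functions: its bilinear form is the sum of the element
  mass matrices (delta_k / 6) [[2,1],[1,2]] of the cells [xi_(k-1), xi_k].\<close>
lemma Wform_eq_cell_sum:
  assumes K: "1 \<le> K" and c: "c 0 = 0" "c K = 0" and d: "d 0 = 0" "d K = 0"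
  shows "Wform K xi c d =
    (\<Sum>k = 1..K. mesh_delta xi k / 6 * (2 * c (k-1) * d (k-1) + c (k-1) * d k + c k * d (k-1) + 2 * c k * d k))"
proof -
  obtain m where m: "K = Suc m" using K by (cases K) auto
  define P where "P k = mesh_delta xi k / 6 * (2 * c (k-1) * d (k-1) + c (k-1) * d k)" for k
  define Q where "Q k = mesh_delta xi k / 6 * (c k * d (k-1) + 2 * c k * d k)" for k
  have "Wform K xi c d = (\<Sum>i = 1..m. c i * (mesh_delta xi i / 6 * d (i-1)
      + (mesh_delta xi i + mesh_delta xi (i+1)) / 3 * d i + mesh_delta xi (i+1) / 6 * d (i+1)))"
    unfolding Wform_eq_sum_rows using Wmat_row_sum[OF _ d] m by (intro sum.cong) auto
  also have "\<dots> = (\<Sum>k = 1..m. P (Suc k)) + (\<Sum>k = 1..m. Q k)"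
    unfolding sum.distrib[symmetric] by (rule sum.cong) (auto simp: P_def Q_def field_simps)
  also have "(\<Sum>k = 1..m. P (Suc k)) = (\<Sum>k = 0..m. P (Suc k))"
    using c(1) by (simp add: sum.atLeast_Suc_atMost P_def)
  also have "\<dots> = (\<Sum>k = 1..Suc m. P k)"
    using sum.shift_bounds_cl_Suc_ivl[of P 0 m] by simp
  also have "(\<Sum>k = 1..m. Q k) = (\<Sum>k = 1..Suc m. Q k)"
    using c(2) m by (simp add: Q_def)
  finally show ?thesis
    unfolding m P_def Q_def sum.distrib[symmetric] by (simp add: algebra_simps)
qed

locale mesh =
  fixes K :: nat and xi :: "nat \<Rightarrow> real"
  assumes K_pos: "1 \<le> K" and xi_0: "xi 0 = 0" and xi_strict: "\<forall>k<K. xi k < xi (Suc k)"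
begin

lemma xi_less: "i < j \<Longrightarrow> j \<le> K \<Longrightarrow> xi i < xi j"
  using strict_chain_less[OF xi_strict] .

lemma xi_le: "i \<le> j \<Longrightarrow> j \<le> K \<Longrightarrow> xi i \<le> xi j"
  using strict_chain_le[OF xi_strict] .

lemma hat_on_cell_right:
  assumes "k \<in> {1..K}" "s \<in> {xi (k-1)..xi k}"
  shows "hat K xi k s = (s - xi (k-1)) / (xi k - xi (k-1))"
  using assms by (simp add: hat_def)

lemma hat_on_cell_left:
  assumes k: "k \<in> {1..K}" and s: "s \<in> {xi (k-1)..xi k}"
  shows "hat K xi (k-1) s = (xi k - s) / (xi k - xi (k-1))"
proof (cases "0 < k - 1 \<and> xi (k - 1 - 1) \<le> s \<and> s \<le> xi (k - 1)")
  case True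
  then have "s = xi (k-1)" using s by auto
  moreover have "xi (k-1-1) < xi (k-1)" "xi (k-1) < xi k" using True k by (auto intro: xi_less)
  ultimately show ?thesis using True by (simp add: hat_def)
next
  case False
  have "k - 1 + 1 = k" "k - 1 < K" using k by auto
  with False s show ?thesis unfolding hat_def by (simp only: if_False) auto
qed

lemma hat_off_cell:
  assumes k: "k \<in> {1..K}" and s: "s \<in> {xi (k-1)..xi k}"
    and j: "j \<le> K" "j \<noteq> k" "j \<noteq> k - 1"
  shows "hat K xi j s = 0"
proof (cases "k < j")
  case True
  have "\<not> xi j \<le> s" if "j < K"
  proof -
    have "xi k < xi j" using True that by (intro xi_less) auto
    then show ?thesis using s by auto
  qed
  moreover have "s = xi (j-1)" if "xi (j-1) \<le> s"
  proof -
    have "xi k \<le> xi (j-1)" using True j by (intro xi_le) auto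
    then show ?thesis using s that by auto
  qed
  ultimately show ?thesis using True unfolding hat_def by auto
next
  case False
  then have jk: "j < k - 1" using j by auto
  have "\<not> s \<le> xi j"
  proof -
    have "xi j < xi (k-1)" using jk k by (intro xi_less) auto
    then show ?thesis using s by auto
  qed
  moreover have "s = xi (j+1)" if "s \<le> xi (j+1)"
  proof -
    have "xi (j+1) \<le> xi (k-1)" using jk k by (intro xi_le) auto
    then show ?thesis using s that by auto
  qed
  ultimately show ?thesis unfolding hat_def by auto
qed

lemma Xmap_on_cell:
  assumes k: "k \<in> {1..K}" and s: "s \<in> {xi (k-1)..xi k}"
  shows "Xmap K xi c s =
    c (k-1) * ((xi k - s) / (xi k - xi (k-1))) + c k * ((s - xi (k-1)) / (xi k - xi (k-1)))"
proof -
  have "Xmap K xi c s = (\<Sum>j\<in>{k-1, k}. c j * hat K xi j s)"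
    unfolding Xmap_def by (rule sum.mono_neutral_right) (use k hat_off_cell[OF k s] in auto)
  also have "\<dots> = c (k-1) * hat K xi (k-1) s + c k * hat K xi k s"
  proof -
    have "k - 1 \<noteq> k" using k by auto
    then show ?thesis by simp
  qed
  finally show ?thesis using hat_on_cell_right[OF k s] hat_on_cell_left[OF k s] by simp
qed

lemma Xmap_convex_combination:
  assumes "s \<in> {xi (k-1)..xi k}" "k \<in> {1..K}"
  obtains t where "0 \<le> t" "t \<le> 1" "\<And>c. Xmap K xi c s = (1-t) * c (k-1) + t * c k"
proof
  have lt: "xi (k-1) < xi k" using assms by (intro xi_less) auto
  define t where "t = (s - xi (k-1)) / (xi k - xi (k-1))"
  show "0 \<le> t" "t \<le> 1" using assms lt by (auto simp: t_def field_simps)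
  have u: "(xi k - s) / (xi k - xi (k-1)) = 1 - t" using lt by (simp add: t_def field_simps)
  show "Xmap K xi c s = (1-t) * c (k-1) + t * c k" for c
    using Xmap_on_cell[OF assms(2,1), of c] unfolding u t_def[symmetric] by simp
qed

lemma hat_eq_Xmap_unit:
  assumes "j \<le> K"
  shows "hat K xi j s = Xmap K xi (\<lambda>i. if i = j then 1 else 0) s"
proof -
  have "Xmap K xi (\<lambda>i. if i = j then 1 else 0) s = (\<Sum>k = 0..K. if k = j then hat K xi k s else 0)"
    unfolding Xmap_def by (rule sum.cong) auto
  then show ?thesis using assms by (simp add: sum.delta)
qed

lemma cell_cover:
  assumes "s \<in> {xi 0..xi K}"
  obtains k where "k \<in> {1..K}" "s \<in> {xi (k-1)..xi k}"
proof -
  have "\<exists>k\<in>{1..n}. s \<in> {xi (k-1)..xi k}" if "1 \<le> n" "n \<le> K" "s \<in> {xi 0..xi n}" for n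
    using that
  proof (induction n)
    case (Suc n)
    show ?case
    proof (cases "s \<le> xi n \<and> 1 \<le> n")
      case True
      then show ?thesis using Suc by fastforce
    next
      case False
      then have "xi n \<le> s" using Suc.prems by (cases n) auto
      then show ?thesis using Suc.prems by (intro bexI[of _ "Suc n"]) auto
    qed
  qed simp
  then show ?thesis using assms K_pos that by blast
qed

lemma has_integral_cells:
  fixes h :: "real \<Rightarrow> real"
  assumes "\<And>k. k \<in> {1..n} \<Longrightarrow> (h has_integral I k) {xi (k-1)..xi k}" "n \<le> K"
  shows "(h has_integral (\<Sum>k=1..n. I k)) {xi 0..xi n}"
  using assms
proof (induction n)
  case (Suc n)
  have "(h has_integral I (Suc n)) {xi n..xi (Suc n)}"
    using Suc.prems(1)[of "Suc n"] by simp
  then have "(h has_integral (\<Sum>k=1..n. I k) + I (Suc n)) {xi 0..xi (Suc n)}"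
    using Suc by (intro has_integral_combine[of "xi 0" "xi n"] xi_le) auto
  then show ?case by simp
qed (simp add: has_integral_refl)

lemma integrable_cells:
  fixes h :: "real \<Rightarrow> real"
  assumes "\<And>k. k \<in> {1..K} \<Longrightarrow> continuous_on {xi (k-1)..xi k} h"
  shows "h integrable_on {xi 0..xi K}"
  using has_integral_cells[where I="\<lambda>k. integral {xi (k-1)..xi k} h" and n=K and h=h] assms
  by (auto simp: integrable_on_def intro: integrable_integral integrable_continuous_real)

lemma continuous_on_cell_Xmap:
  assumes k: "k \<in> {1..K}"
  shows "continuous_on {xi (k-1)..xi k} (Xmap K xi c)"
proof -
  have "xi (k-1) < xi k" using k by (intro xi_less) auto
  then have "continuous_on {xi (k-1)..xi k}
      (\<lambda>s. c (k-1) * ((xi k - s) / (xi k - xi (k-1))) + c k * ((s - xi (k-1)) / (xi k - xi (k-1))))"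
    by (intro continuous_intros) auto
  then show ?thesis
    by (rule continuous_on_cong[THEN iffD1, rotated 2]) (use Xmap_on_cell[OF k] in auto)
qed

lemma Xmap_mult_has_integral:
  assumes c: "c 0 = 0" "c K = 0" and d: "d 0 = 0" "d K = 0"
  shows "((\<lambda>s. Xmap K xi c s * Xmap K xi d s) has_integral Wform K xi c d) {xi 0..xi K}"
  unfolding Wform_eq_cell_sum[OF K_pos c d]
proof (rule has_integral_cells)
  fix k assume k: "k \<in> {1..K}"
  have "xi (k-1) < xi k" using k by (intro xi_less) auto
  from has_integral_product_affine[OF this, of "c (k-1)" "c k" "d (k-1)" "d k"]
  show "((\<lambda>s. Xmap K xi c s * Xmap K xi d s) has_integral
      mesh_delta xi k / 6 * (2 * c (k-1) * d (k-1) + c (k-1) * d k + c k * d (k-1) + 2 * c k * d k))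
      {xi (k-1)..xi k}"
    unfolding mesh_delta_def by (rule has_integral_eq[rotated]) (simp add: Xmap_on_cell[OF k])
qed simp

lemma Xmap_mem_interval:
  fixes a b :: real
  assumes c: "\<forall>k\<le>K. c k \<in> {a..b}" and s: "s \<in> {xi 0..xi K}"
  shows "Xmap K xi c s \<in> {a..b}"
proof -
  obtain k where k: "k \<in> {1..K}" "s \<in> {xi (k-1)..xi k}"
    using cell_cover[OF s] .
  obtain t where "0 \<le> t" "t \<le> 1" "Xmap K xi c s = (1-t) * c (k-1) + t * c k"
    using Xmap_convex_combination[OF k(2,1)] by metis
  moreover have "c (k-1) \<in> {a..b}" "c k \<in> {a..b}" using c k by auto
  ultimately show ?thesis
    using convexD[OF convex_real_interval(5), of "c (k-1)" a b "c k" "1-t" t] by simp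
qed

lemma continuous_on_cell_comp_Xmap:
  assumes F: "continuous_on {a..b} F" and c: "\<forall>k\<le>K. c k \<in> {a..b}" and k: "k \<in> {1..K}"
  shows "continuous_on {xi (k-1)..xi k} (\<lambda>s. F (Xmap K xi c s))"
proof (rule continuous_on_compose2[OF F continuous_on_cell_Xmap[OF k]])
  have "{xi (k-1)..xi k} \<subseteq> {xi 0..xi K}"
    using k xi_le[of 0 "k-1"] xi_le[of k K] by auto
  then show "Xmap K xi c ` {xi (k-1)..xi k} \<subseteq> {a..b}"
    using Xmap_mem_interval[OF c] by auto
qed

lemma Xmap_comp_mult_has_integral_gradA:
  assumes F: "continuous_on {a..b} F" and x: "\<forall>k\<le>K. x k \<in> {a..b}"
  shows "((\<lambda>s. F (Xmap K xi x s) * Xmap K xi c s) has_integral (\<Sum>k = 0..K. c k * gradA K xi F x k))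
    {xi 0..xi K}"
proof -
  have "((\<lambda>s. F (Xmap K xi x s) * hat K xi k s) has_integral gradA K xi F x k) {xi 0..xi K}"
    if k: "k \<le> K" for k
  proof -
    have "(\<lambda>s. F (Xmap K xi x s) * Xmap K xi (\<lambda>i. if i = k then 1 else 0) s) integrable_on {xi 0..xi K}"
      by (intro integrable_cells continuous_on_mult continuous_on_cell_comp_Xmap[OF F x]
          continuous_on_cell_Xmap)
    then have "(\<lambda>s. F (Xmap K xi x s) * hat K xi k s) integrable_on {xi 0..xi K}"
      by (simp add: hat_eq_Xmap_unit[OF k])
    then show ?thesis
      unfolding gradA_def xi_0 by (rule integrable_integral[unfolded xi_0])
  qed
  then have "((\<lambda>s. \<Sum>k = 0..K. c k * (F (Xmap K xi x s) * hat K xi k s))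
      has_integral (\<Sum>k = 0..K. c k * gradA K xi F x k)) {xi 0..xi K}"
    by (intro has_integral_sum has_integral_mult_right) auto
  then show ?thesis
    by (simp add: Xmap_def sum_distrib_left mult.left_commute)
qed

lemma Xmap_interpolation_error:
  assumes lip: "\<kappa>-lipschitz_on {a..b} F"
    and x_mem: "\<forall>k\<le>K. x k \<in> {a..b}" and x_mono: "\<forall>k<K. x k \<le> x (Suc k)"
    and s: "s \<in> {xi 0..xi K}"
  shows "\<bar>F (Xmap K xi x s) - Xmap K xi (\<lambda>k. F (x k)) s\<bar> \<le> \<kappa> * max_gap K x"
proof -
  obtain k where k: "k \<in> {1..K}" "s \<in> {xi (k-1)..xi k}"
    using cell_cover[OF s] .
  obtain t where t: "0 \<le> t" "t \<le> 1" and X: "\<And>c. Xmap K xi c s = (1-t) * c (k-1) + t * c k"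
    using Xmap_convex_combination[OF k(2,1)] by metis
  have "k - 1 < K" "Suc (k-1) = k" using k by auto
  then have x_le: "x (k-1) \<le> x k" using x_mono by metis
  have "\<kappa>-lipschitz_on {x (k-1)..x k} F"
    using x_mem k by (intro lipschitz_on_subset[OF lip]) auto
  then have "\<bar>F ((1-t) * x (k-1) + t * x k) - ((1-t) * F (x (k-1)) + t * F (x k))\<bar> \<le> \<kappa> * (x k - x (k-1))"
    using lipschitz_interpolation_error t x_le by blast
  also have "\<dots> \<le> \<kappa> * max_gap K x"
    using k lipschitz_on_nonneg[OF lip] by (intro mult_left_mono) (auto simp: max_gap_def intro!: Max_ge)
  finally show ?thesis by (simp add: X)
qed

lemma Xmap_mult_interpolation_error_has_integral:
  assumes F: "continuous_on {a..b} F" "F (x 0) = 0" "F (x K) = 0" and x: "\<forall>k\<le>K. x k \<in> {a..b}"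
    and v: "\<forall>i\<in>{1..K - 1}. (\<Sum>j = 1..K - 1. Wmat xi i j * v j) = gradA K xi F x i"
    and nu: "nu 0 = 0" "nu K = 0" "\<forall>i\<in>{1..K - 1}. nu i = v i - F (x i)"
  shows "((\<lambda>s. Xmap K xi nu s * (F (Xmap K xi x s) - Xmap K xi (\<lambda>k. F (x k)) s))
    has_integral Wform K xi nu nu) {xi 0..xi K}"
proof -
  have "Wform K xi nu v = (\<Sum>i = 1..K - 1. nu i * gradA K xi F x i)"
    unfolding Wform_eq_sum_rows using v by simp
  also have "\<dots> = (\<Sum>k = 0..K. nu k * gradA K xi F x k)"
  proof (rule sum.mono_neutral_left)
    have "k = 0 \<or> k = K" if "k \<in> {0..K} - {1..K - 1}" for k
      using that by auto
    then show "\<forall>k\<in>{0..K} - {1..K - 1}. nu k * gradA K xi F x k = 0"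
      using nu(1,2) by fastforce
  qed auto
  finally have "((\<lambda>s. Xmap K xi nu s * (F (Xmap K xi x s) - Xmap K xi (\<lambda>k. F (x k)) s))
      has_integral Wform K xi nu v - Wform K xi nu (\<lambda>k. F (x k))) {xi 0..xi K}"
    using has_integral_diff[OF Xmap_comp_mult_has_integral_gradA[OF F(1) x]
        Xmap_mult_has_integral[OF nu(1,2) F(2,3)]]
    by (simp add: algebra_simps)
  moreover have "Wform K xi nu nu = Wform K xi nu v - Wform K xi nu (\<lambda>k. F (x k))"
    unfolding Wform_diff_right[symmetric] by (rule Wform_cong) (use nu in auto)
  ultimately show ?thesis by simp
qed

lemma Wquad_residual_le:
  assumes lip: "\<kappa>-lipschitz_on {a..b} F" and F_ends: "F a = 0" "F b = 0"
    and x: "x 0 = a" "x K = b" "\<forall>k<K. x k < x (Suc k)"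
    and v: "\<forall>i\<in>{1..K - 1}. (\<Sum>j = 1..K - 1. Wmat xi i j * v j) = gradA K xi F x i"
  shows "Wquad K xi (\<lambda>i. v i - F (x i)) \<le> \<kappa>\<^sup>2 * xi K * (max_gap K x)\<^sup>2"
proof -
  let ?S = "{xi 0..xi K}"
  have x_mem: "\<forall>k\<le>K. x k \<in> {a..b}"
    using strict_chain_le[OF x(3), of 0] strict_chain_le[OF x(3), of _ K] x(1,2) by auto
  define nu where "nu i = (if i \<in> {1..K - 1} then v i - F (x i) else 0)" for i
  define h where "h s = F (Xmap K xi x s) - Xmap K xi (\<lambda>k. F (x k)) s" for s
  have nu: "nu 0 = 0" "nu K = 0" "\<forall>i\<in>{1..K - 1}. nu i = v i - F (x i)"
    using K_pos by (auto simp: nu_def)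
  have h_sq: "(\<lambda>s. (h s)\<^sup>2) integrable_on ?S"
    unfolding h_def
    by (intro integrable_cells continuous_intros continuous_on_cell_comp_Xmap[OF _ x_mem]
        continuous_on_cell_Xmap lipschitz_on_continuous_on[OF lip])
  have "Wquad K xi (\<lambda>i. v i - F (x i)) = Wform K xi nu nu"
    unfolding Wquad_eq_Wform by (rule Wform_cong) (auto simp: nu_def)
  also have "\<dots> \<le> integral ?S (\<lambda>s. (h s)\<^sup>2)"
    using Xmap_mult_interpolation_error_has_integral[OF lipschitz_on_continuous_on[OF lip] _ _ x_mem v nu]
      F_ends x(1,2)
    by (intro square_integral_le_of_inner_eq[OF Xmap_mult_has_integral[OF nu(1,2) nu(1,2)] _ h_sq])
      (simp add: h_def)
  also have "\<dots> \<le> integral ?S (\<lambda>s. (\<kappa> * max_gap K x)\<^sup>2)"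
  proof (rule integral_le[OF h_sq])
    fix s assume "s \<in> ?S"
    then have "\<bar>h s\<bar> \<le> \<kappa> * max_gap K x"
      unfolding h_def
      using Xmap_interpolation_error[OF lip x_mem _ \<open>s \<in> ?S\<close>] x(3) by (simp add: less_imp_le)
    then have "\<bar>h s\<bar>\<^sup>2 \<le> (\<kappa> * max_gap K x)\<^sup>2"
      by (intro power_mono) auto
    then show "(h s)\<^sup>2 \<le> (\<kappa> * max_gap K x)\<^sup>2" by simp
  qed (rule integrable_const_ivl)
  also have "\<dots> = \<kappa>\<^sup>2 * xi K * (max_gap K x)\<^sup>2"
    using xi_0 xi_le[of 0 K] by (simp add: power_mult_distrib)
  finally show ?thesis .
qed

end

theorem lemma27:
  shows "\<exists>C::real. \<forall>(a::real) (b::real) (M::real) (K::nat) (xi::nat \<Rightarrow> real)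
      (x::nat \<Rightarrow> real) (D::nat \<Rightarrow> real \<Rightarrow> real) (\<kappa>::real) (v::nat \<Rightarrow> real).
      a < b \<longrightarrow> 0 < M \<longrightarrow> 1 \<le> K \<longrightarrow>
      xi 0 = 0 \<longrightarrow> xi K = M \<longrightarrow> (\<forall>k<K. xi k < xi (Suc k)) \<longrightarrow>
      x 0 = a \<longrightarrow> x K = b \<longrightarrow> (\<forall>k<K. x k < x (Suc k)) \<longrightarrow>
      (\<forall>n. \<forall>y\<in>{a..b}. (D n has_real_derivative D (Suc n) y) (at y within {a..b})) \<longrightarrow>
      D 1 a = 0 \<longrightarrow> D 1 b = 0 \<longrightarrow>
      0 < \<kappa> \<longrightarrow>
      (\<forall>y\<in>{a..b}. \<bar>D 1 y\<bar> \<le> \<kappa> \<and> \<bar>D 2 y\<bar> \<le> \<kappa> \<and> \<bar>D 3 y\<bar> \<le> \<kappa>) \<longrightarrow>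
      (\<forall>i\<in>{1..K - 1}. (\<Sum>j = 1..K - 1. Wmat xi i j * v j) = gradA K xi (D 1) x i) \<longrightarrow>
      Wquad K xi (\<lambda>i. v i - D 1 (x i))
        \<le> C * \<kappa>\<^sup>2 * mesh_ratio K xi * M * (max_gap K x)\<^sup>2"
proof (intro exI[of _ 1] allI impI)
  fix a b M :: real and K :: nat and xi x :: "nat \<Rightarrow> real" and D :: "nat \<Rightarrow> real \<Rightarrow> real"
    and \<kappa> :: real and v :: "nat \<Rightarrow> real"
  assume "a < b" "0 < M" and K: "1 \<le> K" and xi: "xi 0 = 0" "xi K = M" "\<forall>k<K. xi k < xi (Suc k)"
    and x: "x 0 = a" "x K = b" "\<forall>k<K. x k < x (Suc k)"
    and D: "\<forall>n. \<forall>y\<in>{a..b}. (D n has_real_derivative D (Suc n) y) (at y within {a..b})"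
    and D1_ends: "D 1 a = 0" "D 1 b = 0" and "0 < \<kappa>"
    and bounds: "\<forall>y\<in>{a..b}. \<bar>D 1 y\<bar> \<le> \<kappa> \<and> \<bar>D 2 y\<bar> \<le> \<kappa> \<and> \<bar>D 3 y\<bar> \<le> \<kappa>"
    and v: "\<forall>i\<in>{1..K - 1}. (\<Sum>j = 1..K - 1. Wmat xi i j * v j) = gradA K xi (D 1) x i"
  interpret mesh K xi using K xi by unfold_locales
  have D1': "\<forall>y\<in>{a..b}. (D 1 has_real_derivative D 2 y) (at y within {a..b})"
    using D by (metis Suc_1)
  have "\<kappa>-lipschitz_on {a..b} (D 1)"
  proof (rule lipschitz_onI)
    show "dist (D 1 y) (D 1 z) \<le> \<kappa> * dist y z" if "y \<in> {a..b}" "z \<in> {a..b}" for y z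
      using field_differentiable_bound[of "{a..b}" "D 1" "D 2" \<kappa> y z] D1' bounds that
      by (auto simp: dist_real_def)
  qed (use \<open>0 < \<kappa>\<close> in simp)
  then have "Wquad K xi (\<lambda>i. v i - D 1 (x i)) \<le> \<kappa>\<^sup>2 * M * (max_gap K x)\<^sup>2"
    using Wquad_residual_le[OF _ D1_ends x v] xi(2) by simp
  also have "\<dots> \<le> mesh_ratio K xi * (\<kappa>\<^sup>2 * M * (max_gap K x)\<^sup>2)"
    using mult_right_mono[OF mesh_ratio_ge_1[OF K xi(3)], of "\<kappa>\<^sup>2 * M * (max_gap K x)\<^sup>2"] \<open>0 < M\<close>
    by simp
  finally show "Wquad K xi (\<lambda>i. v i - D 1 (x i)) \<le> 1 * \<kappa>\<^sup>2 * mesh_ratio K xi * M * (max_gap K x)\<^sup>2"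
    by (simp add: ac_simps)
qed

end
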